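(* Let $K$ be a field and $(Q,f,g,c,W)$ as in the setting below, with completed Jacobian algebra $\Lambda$, and assume that either $Q$ satisfies $(\star)$, or $Q$ satisfies $(\diamond)$ and $\prod_{\alpha\in\Omega}c_\alpha\neq1$ for $\Omega$ a set of representatives of the $g$-orbits. Then for every $i\in Q_0$ and every $\alpha\in Q_1$ we have $\alpha\cdot z_i=0$ and $z_i\cdot\alpha=0$ in $\Lambda$.
   Context: Setting: $Q$ is a finite quiver with vertex set $Q_0$ and arrow set $Q_1$, connected, without loops or $2$-cycles, every vertex being the source of exactly two arrows and the target of exactly two arrows, equipped with bijections $f,g:Q_1\to Q_1$ such that for each $\alpha$, $\{f(\alpha),g(\alpha)\}$ is the set of the two arrows starting at the target of $\alpha$, and $f^3=\mathrm{id}$. $n_\alpha$ is the size of the $g$-orbit of $\alpha$. $c:Q_1\to K^\times$ is constant on $g$-orbits. Paths compose left to right. $W=\sum_\alpha \alpha\cdot f(\alpha)\cdot f^2(\alpha)-\sum_\beta c_\beta\,\beta\cdot g(\beta)\cdots g^{n_\beta-1}(\beta)$ (sums over representatives of $f$-orbits, resp. $g$-orbits). $\Lambda$ is the completed Jacobian algebra of $(Q,W)$. For $i\in Q_0$, $z_i$ is the image in $\Lambda$ of $\alpha\cdot f(\alpha)\cdot f^2(\alpha)$ for an arrow $\alpha$ starting at $i$ (independent of the choice of $\alpha$ in $\Lambda$). $(\star)$: for every $\alpha$, $n_\alpha\ge4$ or $n_{f(\alpha)}\ge4$. $(\diamond)$: $n_\alpha=3$ for all $\alpha$. *)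

theory Defs
  imports Main
begin

(* Quiver: vertices = UNIV :: 'v, arrows = UNIV :: 'a, source s, target t.
   A path is a pair (v, as): v the starting vertex, as a list of arrows
   composed left to right. (v, []) is the trivial path e_v. *)

definition valid_path :: "('a \<Rightarrow> 'v) \<Rightarrow> ('a \<Rightarrow> 'v) \<Rightarrow> 'v \<times> 'a list \<Rightarrow> bool" where
  "valid_path s t p = (case p of (v, as) \<Rightarrow>
      (as = [] \<or> (s (hd as) = v \<and> successively (\<lambda>a b. t a = s b) as)))"

definition path_end :: "('a \<Rightarrow> 'v) \<Rightarrow> 'v \<times> 'a list \<Rightarrow> 'v" where
  "path_end t p = (case p of (v, as) \<Rightarrow> if as = [] then v else t (last as))"

(* elements of the completed path algebra K<<Q>>: arbitrary (formal, possibly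
   infinite) K-linear combinations of paths, i.e. functions paths => K vanishing
   off valid paths *)
definition is_series :: "('a \<Rightarrow> 'v) \<Rightarrow> ('a \<Rightarrow> 'v) \<Rightarrow> ('v \<times> 'a list \<Rightarrow> 'k::field) \<Rightarrow> bool" where
  "is_series s t x = (\<forall>p. \<not> valid_path s t p \<longrightarrow> x p = 0)"

definition ser_mult :: "('a \<Rightarrow> 'v) \<Rightarrow> ('a \<Rightarrow> 'v) \<Rightarrow> ('v \<times> 'a list \<Rightarrow> 'k::field)
     \<Rightarrow> ('v \<times> 'a list \<Rightarrow> 'k) \<Rightarrow> ('v \<times> 'a list \<Rightarrow> 'k)" where
  "ser_mult s t x y = (\<lambda>(v, as). if valid_path s t (v, as) then
      (\<Sum>k\<le>length as. x (v, take k as) * y (path_end t (v, take k as), drop k as))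
    else 0)"

definition path_ser :: "'v \<times> 'a list \<Rightarrow> ('v \<times> 'a list \<Rightarrow> 'k::field)" where
  "path_ser p = (\<lambda>q. if q = p then 1 else 0)"

definition arrows_path :: "('a \<Rightarrow> 'v) \<Rightarrow> 'a list \<Rightarrow> 'v \<times> 'a list" where
  "arrows_path s as = (s (hd as), as)"

(* cyclic derivative of a potential W (a series supported on cycles) w.r.t. the
   arrow gam: for a cycle a_1...a_n, d_gam(a_1...a_n) = sum over k with a_k = gam
   of a_{k+1}...a_n a_1...a_{k-1}.  The coefficient of a path q from t gam to
   s gam in d_gam W is the sum of the coefficients of W at the rotations of gam q. *)
definition cyc_deriv :: "('a \<Rightarrow> 'v) \<Rightarrow> ('a \<Rightarrow> 'v) \<Rightarrow> ('v \<times> 'a list \<Rightarrow> 'k::field)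
     \<Rightarrow> 'a \<Rightarrow> ('v \<times> 'a list \<Rightarrow> 'k)" where
  "cyc_deriv s t W gam = (\<lambda>(v, as).
     if valid_path s t (v, as) \<and> v = t gam \<and> path_end t (v, as) = s gam
     then (\<Sum>j<Suc (length as). W (arrows_path s (rotate j (gam # as))))
     else 0)"

definition jac_ideal :: "('a \<Rightarrow> 'v) \<Rightarrow> ('a \<Rightarrow> 'v) \<Rightarrow> ('v \<times> 'a list \<Rightarrow> 'k::field)
     \<Rightarrow> ('v \<times> 'a list \<Rightarrow> 'k) \<Rightarrow> bool" where
  "jac_ideal s t W x = (\<exists>L :: (('v \<times> 'a list \<Rightarrow> 'k) \<times> 'a \<times> ('v \<times> 'a list \<Rightarrow> 'k)) list.
      (\<forall>(a, gam, b) \<in> set L. is_series s t a \<and> is_series s t b) \<and>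
      x = (\<lambda>p. \<Sum>(a, gam, b) \<leftarrow> L. ser_mult s t (ser_mult s t a (cyc_deriv s t W gam)) b p))"

(* closure of that ideal in the arrow-ideal-adic topology of K<<Q>>:
   x lies in  J + m^N  for every N, where m^N consists of the series supported
   on paths of length >= N.  x lies in this closure iff x = 0 in the completed
   Jacobian algebra Lambda = K<<Q>> / closure(J). *)
definition zero_in_jacobian :: "('a \<Rightarrow> 'v) \<Rightarrow> ('a \<Rightarrow> 'v) \<Rightarrow> ('v \<times> 'a list \<Rightarrow> 'k::field)
     \<Rightarrow> ('v \<times> 'a list \<Rightarrow> 'k) \<Rightarrow> bool" where
  "zero_in_jacobian s t W x = (\<forall>N::nat. \<exists>y. jac_ideal s t W y \<and>
      (\<forall>p. length (snd p) < N \<longrightarrow> x p = y p))"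

definition orbit_of :: "('a \<Rightarrow> 'a) \<Rightarrow> 'a \<Rightarrow> 'a set" where
  "orbit_of h a = {(h ^^ k) a | k. True}"

definition orb_size :: "('a \<Rightarrow> 'a) \<Rightarrow> 'a \<Rightarrow> nat" where
  "orb_size g a = card (orbit_of g a)"

definition orbit_reps :: "('a \<Rightarrow> 'a) \<Rightarrow> 'a set \<Rightarrow> bool" where
  "orbit_reps h R = (\<forall>a. \<exists>!r. r \<in> R \<and> r \<in> orbit_of h a)"

definition potential :: "('a \<Rightarrow> 'v) \<Rightarrow> ('a \<Rightarrow> 'a) \<Rightarrow> ('a \<Rightarrow> 'a) \<Rightarrow> ('a \<Rightarrow> 'k::field)
     \<Rightarrow> 'a set \<Rightarrow> 'a set \<Rightarrow> ('v \<times> 'a list \<Rightarrow> 'k)" where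
  "potential s f g c Rf Rg = (\<lambda>p.
      (\<Sum>a\<in>Rf. path_ser (arrows_path s [a, f a, f (f a)]) p)
    - (\<Sum>b\<in>Rg. c b * path_ser (arrows_path s (map (\<lambda>k. (g ^^ k) b) [0..<orb_size g b])) p))"

definition quiver_setting :: "('a::finite \<Rightarrow> 'v::finite) \<Rightarrow> ('a \<Rightarrow> 'v) \<Rightarrow> ('a \<Rightarrow> 'a) \<Rightarrow> ('a \<Rightarrow> 'a)
     \<Rightarrow> ('a \<Rightarrow> 'k::field) \<Rightarrow> bool" where
  "quiver_setting s t f g c = (
      (\<forall>v w. (v, w) \<in> ({(s a, t a) | a. True} \<union> {(t a, s a) | a. True})\<^sup>*) \<and>
      (\<forall>a. s a \<noteq> t a) \<and>
      (\<forall>a b. \<not> (s a = t b \<and> t a = s b)) \<and>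
      (\<forall>v. card {a. s a = v} = 2) \<and>
      (\<forall>v. card {a. t a = v} = 2) \<and>
      bij f \<and> bij g \<and>
      (\<forall>a. {f a, g a} = {b. s b = t a}) \<and>
      f ^^ 3 = id \<and>
      (\<forall>a. c a \<noteq> 0) \<and>
      (\<forall>a b. b \<in> orbit_of g a \<longrightarrow> c b = c a))"

end

theory Submission
  imports Defs
begin

text \<open>Modulo the Jacobian ideal, the cyclic derivative
  \<open>\<partial>\<^sub>\<gamma>W = f(\<gamma>) f\<^sup>2(\<gamma>) - c\<^sub>\<gamma> g(\<gamma>) \<cdots> g\<^bsup>n\<^sub>\<gamma>-1\<^esup>(\<gamma>)\<close> lets one replace the subpath
  \<open>f(\<gamma>) f\<^sup>2(\<gamma>)\<close> of any path by \<open>c\<^sub>\<gamma>\<close> times \<open>g(\<gamma>) \<cdots> g\<^bsup>n\<^sub>\<gamma>-1\<^esup>(\<gamma>)\<close>. After at most one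
  such replacement, both \<open>\<alpha> z\<^sub>i\<close> and \<open>z\<^sub>i \<alpha>\<close> are paths containing a subpath
  \<open>a f(a) g(f(a))\<close>, so it suffices that every such path vanishes in \<open>\<Lambda>\<close>.
  Two replacements turn \<open>a f(a) g(f(a))\<close> into \<open>\<sigma> f(\<sigma>) g(f(\<sigma>))\<close>, with \<open>n\<^sub>\<sigma> - 3\<close> arrows
  added in front and \<open>n\<^bsub>f(\<sigma>)\<^esub> - 3\<close> behind. Under \<open>(\<star>)\<close> the path grows at every
  step, so modulo \<open>J\<close> it is congruent to paths of arbitrary length. Under \<open>(\<diamond>)\<close> nothing is added, and after
  two such moves one is back at \<open>a f(a) g(f(a))\<close> multiplied by the product of \<open>c\<close> over
  four \<open>g\<close>-orbits, which are all the \<open>g\<close>-orbits; as this product is not \<open>1\<close>, the path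
  lies in \<open>J\<close>.\<close>

section \<open>Single paths in the completed path algebra\<close>

lemma valid_path_append:
  assumes "valid_path s t (v, U)" "valid_path s t (w, V)" "path_end t (v, U) = w"
  shows "valid_path s t (v, U @ V)"
  using assms
  by (auto simp: valid_path_def path_end_def successively_append_iff hd_append split: if_splits)

lemma path_end_append: "path_end t (v, U @ V) = path_end t (path_end t (v, U), V)"
  by (simp add: path_end_def)

lemma is_series_path_ser: "valid_path s t P \<Longrightarrow> is_series s t (path_ser P)"
  by (auto simp: is_series_def path_ser_def)

lemma ser_mult_path_ser:
  assumes P: "valid_path s t P" and Q: "valid_path s t Q" and PQ: "path_end t P = fst Q"
  shows "ser_mult s t (path_ser P) (path_ser Q) = (path_ser (fst P, snd P @ snd Q) :: _ \<Rightarrow> 'k::field)"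
proof (rule ext, clarify)
  fix w as
  obtain v U where P_eq: "P = (v, U)" by (cases P)
  obtain v' V where Q_eq: "Q = (v', V)" by (cases Q)
  have ends: "path_end t (v, U) = v'" using PQ P_eq Q_eq by simp
  have term_eq: "(path_ser P (w, take k as) :: 'k) * path_ser Q (path_end t (w, take k as), drop k as)
      = (if (w, as) = (v, U @ V) \<and> k = length U then 1 else 0)" if "k \<le> length as" for k
  proof (cases "(w, take k as) = (v, U) \<and> drop k as = V")
    case True
    then show ?thesis using ends that by (auto simp: path_ser_def P_eq Q_eq)
  next
    case False
    then have "\<not> ((w, as) = (v, U @ V) \<and> k = length U)" by auto
    with False show ?thesis by (auto simp: path_ser_def P_eq Q_eq)
  qed
  have "(\<Sum>k\<le>length as. (path_ser P (w, take k as) :: 'k) * path_ser Q (path_end t (w, take k as), drop k as))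
      = (\<Sum>k\<le>length as. if (w, as) = (v, U @ V) \<and> k = length U then 1 else 0)"
    by (rule sum.cong) (simp_all add: term_eq)
  also have "\<dots> = (if (w, as) = (v, U @ V) then 1 else 0)"
    by (auto simp: sum.delta')
  finally have sum_eq: "(\<Sum>k\<le>length as. (path_ser P (w, take k as) :: 'k) * path_ser Q (path_end t (w, take k as), drop k as))
      = (if (w, as) = (v, U @ V) then 1 else 0)" .
  have "valid_path s t (v, U @ V)" using valid_path_append[of s t v U v' V] P Q ends P_eq Q_eq by simp
  moreover have "ser_mult s t (path_ser P) (path_ser Q) (w, as)
      = (if valid_path s t (w, as) then if (w, as) = (v, U @ V) then 1 else 0 else (0::'k))"
    by (simp only: ser_mult_def case_prod_conv sum_eq)
  ultimately show "ser_mult s t (path_ser P) (path_ser Q) (w, as) = (path_ser (fst P, snd P @ snd Q) :: _ \<Rightarrow> 'k) (w, as)"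
    by (auto simp: P_eq Q_eq path_ser_def)
qed

lemma ser_mult_path_ser_eq_0:
  assumes "path_end t P \<noteq> fst Q"
  shows "ser_mult s t (path_ser P) (path_ser Q) = (\<lambda>_. (0::'k::field))"
  using assms by (auto simp: fun_eq_iff ser_mult_def path_ser_def intro!: sum.neutral)

lemma ser_mult_diff_right:
  "ser_mult s t x (\<lambda>p. y p - (k::'k::field) * z p) = (\<lambda>p. ser_mult s t x y p - k * ser_mult s t x z p)"
  by (rule ext) (auto simp: ser_mult_def sum_subtractf sum_distrib_left algebra_simps)

lemma ser_mult_diff_left:
  "ser_mult s t (\<lambda>p. y p - (k::'k::field) * z p) x = (\<lambda>p. ser_mult s t y x p - k * ser_mult s t z x p)"
  by (rule ext) (auto simp: ser_mult_def sum_subtractf sum_distrib_left algebra_simps)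

lemma ser_mult_scale_left:
  "ser_mult s t (\<lambda>p. (k::'k::field) * y p) x = (\<lambda>p. k * ser_mult s t y x p)"
  by (rule ext) (auto simp: ser_mult_def sum_distrib_left algebra_simps)

section \<open>Orbits of a permutation of a finite type\<close>

lemma funpow_in_orbit_of: "(h ^^ k) a \<in> orbit_of h a"
  by (auto simp: orbit_of_def)

lemma self_in_orbit_of: "a \<in> orbit_of h a"
  using funpow_in_orbit_of[where k=0] by simp

lemma
  fixes h :: "'a::finite \<Rightarrow> 'a"
  assumes "inj h"
  shows orb_size_gt_0: "0 < orb_size h a"
    and funpow_orb_size: "(h ^^ orb_size h a) a = a"
    and funpow_orbit_inj: "\<lbrakk>i < orb_size h a; j < orb_size h a; (h ^^ i) a = (h ^^ j) a\<rbrakk> \<Longrightarrow> i = j"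
    and orbit_of_eq_image: "orbit_of h a = (\<lambda>k. (h ^^ k) a) ` {..<orb_size h a}"
proof -
  define m where "m = (LEAST n. n > 0 \<and> (h ^^ n) a = a)"
  have m: "m > 0" "(h ^^ m) a = a"
    using funpow_inj_finite[OF assms, of a] LeastI_ex[of "\<lambda>n. n > 0 \<and> (h ^^ n) a = a"]
    unfolding m_def by auto
  have m_least: "(h ^^ k) a \<noteq> a" if "0 < k" "k < m" for k
    using not_less_Least that unfolding m_def by blast
  have inj_below_m: "i = j" if ij: "(h ^^ i) a = (h ^^ j) a" "i < m" "j < m" for i j
  proof (rule ccontr)
    assume "i \<noteq> j"
    then obtain i' j' where ij: "i' < j'" "j' < m" "(h ^^ i') a = (h ^^ j') a"
      using ij by (metis linorder_neqE_nat)
    have "(h ^^ i') ((h ^^ (j' - i')) a) = (h ^^ i') a"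
      using ij by (metis add_diff_inverse_nat funpow_add less_imp_not_less o_apply)
    then have "(h ^^ (j' - i')) a = a" using inj_fn[OF assms, of i'] by (meson injD)
    with m_least[of "j' - i'"] ij show False by linarith
  qed
  have orbit: "orbit_of h a = (\<lambda>k. (h ^^ k) a) ` {..<m}"
  proof
    show "orbit_of h a \<subseteq> (\<lambda>k. (h ^^ k) a) ` {..<m}"
    proof
      fix x assume "x \<in> orbit_of h a"
      then obtain k where "x = (h ^^ k) a" by (auto simp: orbit_of_def)
      then have "x = (h ^^ (k mod m)) a" using funpow_mod_eq[of m h a k] m by simp
      then show "x \<in> (\<lambda>k. (h ^^ k) a) ` {..<m}" using m by auto
    qed
  qed (auto simp: orbit_of_def)
  have "orb_size h a = m"
    unfolding orb_size_def orbit by (subst card_image) (auto intro!: inj_onI inj_below_m)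
  then show "0 < orb_size h a" "(h ^^ orb_size h a) a = a"
    "orbit_of h a = (\<lambda>k. (h ^^ k) a) ` {..<orb_size h a}"
    "\<lbrakk>i < orb_size h a; j < orb_size h a; (h ^^ i) a = (h ^^ j) a\<rbrakk> \<Longrightarrow> i = j"
    using m orbit inj_below_m by auto
qed

lemma orbit_of_eq:
  fixes h :: "'a::finite \<Rightarrow> 'a"
  assumes "inj h" "b \<in> orbit_of h a"
  shows "orbit_of h b = orbit_of h a"
proof -
  obtain k where b: "b = (h ^^ k) a" using assms(2) by (auto simp: orbit_of_def)
  define n where "n = orb_size h a"
  have n: "n > 0" "(h ^^ n) a = a" using orb_size_gt_0 funpow_orb_size assms(1) n_def by auto
  have "((h ^^ n) ^^ k) a = a" by (induction k) (use n in auto)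
  then have a: "a = (h ^^ (n * k - k)) b"
  proof -
    assume nk: "((h ^^ n) ^^ k) a = a"
    have "(h ^^ (n * k - k)) b = (h ^^ (n * k - k + k)) a" by (simp add: b funpow_add)
    also have "n * k - k + k = n * k" using n by (simp add: le_add_diff_inverse2)
    finally show ?thesis using nk by (simp add: funpow_mult mult.commute)
  qed
  show ?thesis
  proof
    show "orbit_of h b \<subseteq> orbit_of h a"
      by (auto simp: orbit_of_def b funpow_add[symmetric, unfolded o_def] simp del: funpow.simps)
        (metis funpow_add o_apply)
    show "orbit_of h a \<subseteq> orbit_of h b"
      by (auto simp: orbit_of_def) (metis a funpow_add o_apply)
  qed
qed

lemma orb_size_eq:
  fixes h :: "'a::finite \<Rightarrow> 'a"
  assumes "inj h" "b \<in> orbit_of h a"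
  shows "orb_size h b = orb_size h a"
  using orbit_of_eq[OF assms] by (simp add: orb_size_def)

lemma orb_size_ge_3:
  fixes h :: "'a::finite \<Rightarrow> 'a"
  assumes "inj h" "h a \<noteq> a" "h (h a) \<noteq> a"
  shows "orb_size h a \<ge> 3"
proof (rule ccontr)
  assume "\<not> ?thesis"
  then have "orb_size h a = 1 \<or> orb_size h a = 2" using orb_size_gt_0[OF assms(1), of a] by linarith
  then show False using funpow_orb_size[OF assms(1), of a] assms(2,3) by (auto simp: numeral_2_eq_2)
qed

lemma prod_orbit_reps_eq:
  fixes h :: "'a::finite \<Rightarrow> 'a" and w :: "'a \<Rightarrow> 'k::comm_monoid_mult"
  assumes "inj h" "orbit_reps h R" "orbit_reps h P"
    and w: "\<And>a b. b \<in> orbit_of h a \<Longrightarrow> w b = w a"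
  shows "(\<Prod>r\<in>R. w r) = (\<Prod>p\<in>P. w p)"
proof -
  define w_orb where "w_orb Orb = w (SOME x. x \<in> Orb)" for Orb
  have w_via_orbit: "w a = w_orb (orbit_of h a)" for a
    using someI[of "\<lambda>x. x \<in> orbit_of h a", OF self_in_orbit_of] w unfolding w_orb_def by metis
  have prod_eq: "(\<Prod>r\<in>Q. w r) = (\<Prod>Orb\<in>range (orbit_of h). w_orb Orb)" if Q: "orbit_reps h Q" for Q
  proof -
    have "inj_on (orbit_of h) Q"
      using Q self_in_orbit_of unfolding orbit_reps_def inj_on_def by metis
    moreover have "orbit_of h ` Q = range (orbit_of h)"
    proof (intro subset_antisym subsetI)
      fix Orb assume "Orb \<in> range (orbit_of h)"
      then obtain a where a: "Orb = orbit_of h a" by blast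
      obtain r where "r \<in> Q" "r \<in> orbit_of h a" using Q unfolding orbit_reps_def by blast
      then show "Orb \<in> orbit_of h ` Q" using a orbit_of_eq[OF assms(1)] by auto
    qed auto
    ultimately show ?thesis
      using prod.reindex[of "orbit_of h" Q w_orb] by (simp add: w_via_orbit)
  qed
  show ?thesis using prod_eq[OF assms(2)] prod_eq[OF assms(3)] by simp
qed

definition cycle_word :: "('a \<Rightarrow> 'a) \<Rightarrow> 'a \<Rightarrow> 'a list" where
  "cycle_word h b = map (\<lambda>k. (h ^^ k) b) [0..<orb_size h b]"

definition cycle_tail :: "('a \<Rightarrow> 'a) \<Rightarrow> 'a \<Rightarrow> 'a list" where
  "cycle_tail h b = map (\<lambda>k. (h ^^ k) b) [1..<orb_size h b]"

lemma cycle_word_eq_Cons: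
  fixes h :: "'a::finite \<Rightarrow> 'a"
  assumes "inj h"
  shows "cycle_word h b = b # cycle_tail h b"
  using orb_size_gt_0[OF assms, of b] by (simp add: cycle_word_def cycle_tail_def upt_conv_Cons)

lemma rotate_map_periodic:
  assumes "\<And>k. \<phi> (k + m) = \<phi> k"
  shows "rotate j (map \<phi> [0..<m]) = map (\<lambda>k. \<phi> (k + j)) [0..<m]"
proof (induction j)
  case (Suc j)
  show ?case
  proof (cases m)
    case (Suc m')
    have "rotate (Suc j) (map \<phi> [0..<m]) = rotate1 (map (\<lambda>k. \<phi> (k + j)) [0..<m])"
      using Suc.IH by (simp add: rotate_Suc)
    also have "\<dots> = map (\<lambda>k. \<phi> (k + j)) [1..<m] @ [\<phi> j]"
    proof -
      have "[0..<m] = 0 # [1..<m]" using Suc by (simp add: upt_conv_Cons)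
      then show ?thesis by simp
    qed
    also have "\<phi> j = \<phi> (m + j)"
      using assms[of j] by (simp add: add.commute)
    also have "map (\<lambda>k. \<phi> (k + j)) [1..<m] @ [\<phi> (m + j)] = map (\<lambda>k. \<phi> (k + j)) [1..<Suc m]"
      using Suc by simp
    also have "\<dots> = map (\<lambda>k. \<phi> (k + Suc j)) [0..<m]"
      by (induction m) auto
    finally show ?thesis .
  qed simp
qed simp

lemma rotate_cycle_word:
  fixes h :: "'a::finite \<Rightarrow> 'a"
  assumes "inj h"
  shows "rotate j (cycle_word h b) = cycle_word h ((h ^^ j) b)"
proof -
  have periodic: "(h ^^ (k + orb_size h b)) b = (h ^^ k) b" for k
    by (simp add: funpow_add funpow_orb_size[OF assms])
  have "rotate j (cycle_word h b) = map (\<lambda>k. (h ^^ (k + j)) b) [0..<orb_size h b]"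
    unfolding cycle_word_def by (rule rotate_map_periodic) (rule periodic)
  also have "\<dots> = cycle_word h ((h ^^ j) b)"
    unfolding cycle_word_def orb_size_eq[OF assms funpow_in_orbit_of] by (simp add: funpow_add)
  finally show ?thesis .
qed

lemma rotate_eq_imp_rotate: "rotate j xs = ys \<Longrightarrow> \<exists>k. xs = rotate k ys"
proof (cases "xs = []")
  case False
  assume ys: "rotate j xs = ys"
  define L where "L = length xs"
  have "(L - j mod L + j) mod L = (L - j mod L + j mod L) mod L" by (simp add: mod_add_right_eq)
  also have "\<dots> = 0" using False by (simp add: L_def le_add_diff_inverse2 less_imp_le)
  finally have "rotate (L - j mod L) ys = xs"
    unfolding ys[symmetric] rotate_rotate L_def by (simp add: rotate_id)
  then show ?thesis by metis
qed simp

lemma sum_cycle_word_rotations: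
  fixes h :: "'a::finite \<Rightarrow> 'a" and w :: "'a \<Rightarrow> 'k::comm_monoid_add"
  assumes inj: "inj h" and reps: "orbit_reps h R"
    and w: "\<And>a b. b \<in> orbit_of h a \<Longrightarrow> w b = w a"
  shows "(\<Sum>j<Suc (length as). \<Sum>b\<in>R. if cycle_word h b = rotate j (\<gamma> # as) then w b else 0)
       = (if as = cycle_tail h \<gamma> then w \<gamma> else 0)"
proof (cases "as = cycle_tail h \<gamma>")
  case False
  have "cycle_word h b \<noteq> rotate j (\<gamma> # as)" for j b
  proof
    assume "cycle_word h b = rotate j (\<gamma> # as)"
    then obtain k where "\<gamma> # as = rotate k (cycle_word h b)" using rotate_eq_imp_rotate by metis
    also have "\<dots> = cycle_word h ((h ^^ k) b)" by (rule rotate_cycle_word[OF inj])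
    also have "\<dots> = (h ^^ k) b # cycle_tail h ((h ^^ k) b)" by (rule cycle_word_eq_Cons[OF inj])
    finally show False using False by simp
  qed
  with False show ?thesis by simp
next
  case True
  define m where "m = orb_size h \<gamma>"
  have len: "Suc (length as) = m"
    using True orb_size_gt_0[OF inj, of \<gamma>] by (simp add: cycle_tail_def m_def)
  have inner: "(\<Sum>b\<in>R. if cycle_word h b = rotate j (\<gamma> # as) then w b else 0)
      = (if (h ^^ j) \<gamma> \<in> R then w \<gamma> else 0)" for j
  proof -
    have "cycle_word h b = rotate j (\<gamma> # as) \<longleftrightarrow> b = (h ^^ j) \<gamma>" for b
      using True by (simp add: cycle_word_eq_Cons[OF inj, symmetric] rotate_cycle_word[OF inj])
        (metis cycle_word_eq_Cons[OF inj] list.inject)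
    then show ?thesis
      using w[OF funpow_in_orbit_of, of j \<gamma>] by (simp add: sum.delta')
  qed
  obtain r where r: "r \<in> R" "r \<in> orbit_of h \<gamma>"
    and r_unique: "\<And>r'. r' \<in> R \<Longrightarrow> r' \<in> orbit_of h \<gamma> \<Longrightarrow> r' = r"
    using reps unfolding orbit_reps_def by blast
  obtain j0 where j0: "j0 < m" "r = (h ^^ j0) \<gamma>"
    using r(2) orbit_of_eq_image[OF inj] m_def by auto
  have "(h ^^ j) \<gamma> \<in> R \<longleftrightarrow> j = j0" if "j < m" for j
    using that j0 r r_unique[OF _ funpow_in_orbit_of] funpow_orbit_inj[OF inj] m_def by metis
  then have "(\<Sum>j<Suc (length as). \<Sum>b\<in>R. if cycle_word h b = rotate j (\<gamma> # as) then w b else 0)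
      = (\<Sum>j<m. if j = j0 then w \<gamma> else 0)"
    unfolding len inner by (intro sum.cong) auto
  also have "\<dots> = w \<gamma>" using j0 by simp
  finally show ?thesis using True by simp
qed

lemma valid_path_cycle_tail:
  fixes h :: "'a::finite \<Rightarrow> 'a"
  assumes inj: "inj h" and s_h: "\<And>x. s (h x) = t x" and size: "orb_size h \<gamma> \<ge> 2"
  shows "valid_path s t (t \<gamma>, cycle_tail h \<gamma>) \<and> path_end t (t \<gamma>, cycle_tail h \<gamma>) = s \<gamma>"
proof -
  define m where "m = orb_size h \<gamma>"
  have hd: "hd (cycle_tail h \<gamma>) = h \<gamma>" using size by (simp add: cycle_tail_def upt_conv_Cons)
  have succ: "successively (\<lambda>a b. t a = s b) (cycle_tail h \<gamma>)"
    unfolding successively_conv_nth cycle_tail_def by (auto simp: s_h)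
  have "last (cycle_tail h \<gamma>) = (h ^^ (m - 1)) \<gamma>"
    using size by (simp add: cycle_tail_def m_def last_map)
  then have "t (last (cycle_tail h \<gamma>)) = s ((h ^^ Suc (m - 1)) \<gamma>)" by (simp add: s_h)
  also have "Suc (m - 1) = m" using size m_def by simp
  finally have last: "t (last (cycle_tail h \<gamma>)) = s \<gamma>"
    using funpow_orb_size[OF inj] m_def by simp
  show ?thesis using size hd succ last s_h
    by (simp add: valid_path_def path_end_def cycle_tail_def)
qed

section \<open>The closed Jacobian ideal\<close>

lemma jac_ideal_zero: "jac_ideal s t W (\<lambda>_. 0)"
  unfolding jac_ideal_def by (rule exI[of _ "[]"]) (simp add: fun_eq_iff)

lemma jac_ideal_add:
  assumes "jac_ideal s t W x" "jac_ideal s t W y"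
  shows "jac_ideal s t W (\<lambda>p. x p + y p)"
proof -
  obtain L1 L2 where
    "\<forall>(a, gam, b) \<in> set L1. is_series s t a \<and> is_series s t b"
    "x = (\<lambda>p. \<Sum>(a, gam, b) \<leftarrow> L1. ser_mult s t (ser_mult s t a (cyc_deriv s t W gam)) b p)"
    "\<forall>(a, gam, b) \<in> set L2. is_series s t a \<and> is_series s t b"
    "y = (\<lambda>p. \<Sum>(a, gam, b) \<leftarrow> L2. ser_mult s t (ser_mult s t a (cyc_deriv s t W gam)) b p)"
    using assms unfolding jac_ideal_def by blast
  then show ?thesis
    unfolding jac_ideal_def by (intro exI[of _ "L1 @ L2"]) auto
qed

lemma jac_ideal_scale:
  assumes "jac_ideal s t W x"
  shows "jac_ideal s t W (\<lambda>p. k * x p)"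
proof -
  obtain L where L: "\<forall>(a, gam, b) \<in> set L. is_series s t a \<and> is_series s t b"
    "x = (\<lambda>p. \<Sum>(a, gam, b) \<leftarrow> L. ser_mult s t (ser_mult s t a (cyc_deriv s t W gam)) b p)"
    using assms unfolding jac_ideal_def by blast
  define L' where "L' = map (\<lambda>(a, gam, b). ((\<lambda>p. k * a p), gam, b)) L"
  have "(\<lambda>p. k * x p) = (\<lambda>p. \<Sum>(a, gam, b) \<leftarrow> L'. ser_mult s t (ser_mult s t a (cyc_deriv s t W gam)) b p)"
    unfolding L'_def L(2)
    by (simp add: ser_mult_scale_left sum_list_const_mult[symmetric] case_prod_unfold o_def)
  moreover have "\<forall>(a, gam, b) \<in> set L'. is_series s t a \<and> is_series s t b"
    using L(1) unfolding L'_def by (auto simp: is_series_def)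
  ultimately show ?thesis unfolding jac_ideal_def by blast
qed

lemma jac_ideal_chain:
  assumes "jac_ideal s t W (\<lambda>p. x p - k1 * y p)" "jac_ideal s t W (\<lambda>p. y p - k2 * z p)"
  shows "jac_ideal s t W (\<lambda>p. x p - (k1 * k2) * z p)"
proof -
  have "jac_ideal s t W (\<lambda>p. (x p - k1 * y p) + k1 * (y p - k2 * z p))"
    by (rule jac_ideal_add[OF assms(1) jac_ideal_scale[OF assms(2)]])
  then show ?thesis by (simp add: algebra_simps)
qed

lemma zero_in_jacobian_of_jac_ideal: "jac_ideal s t W x \<Longrightarrow> zero_in_jacobian s t W x"
  unfolding zero_in_jacobian_def by blast

lemma zero_in_jacobian_transfer:
  assumes "jac_ideal s t W (\<lambda>p. x p - k * y p)" "zero_in_jacobian s t W y"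
  shows "zero_in_jacobian s t W x"
  unfolding zero_in_jacobian_def
proof
  fix N
  obtain y' where y': "jac_ideal s t W y'" "\<forall>p. length (snd p) < N \<longrightarrow> y p = y' p"
    using assms(2) unfolding zero_in_jacobian_def by blast
  have "jac_ideal s t W (\<lambda>p. (x p - k * y p) + k * y' p)"
    by (rule jac_ideal_add[OF assms(1) jac_ideal_scale[OF y'(1)]])
  moreover have "\<forall>p. length (snd p) < N \<longrightarrow> x p = (x p - k * y p) + k * y' p"
    using y'(2) by simp
  ultimately show "\<exists>y. jac_ideal s t W y \<and> (\<forall>p. length (snd p) < N \<longrightarrow> x p = y p)" by blast
qed

lemma zero_in_jacobian_of_long_paths:
  assumes "\<And>N. \<exists>k Z. jac_ideal s t W (\<lambda>p. x p - k * path_ser Z p) \<and> length (snd Z) \<ge> N"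
  shows "zero_in_jacobian s t W x"
  unfolding zero_in_jacobian_def
proof
  fix N
  obtain k Z where kZ: "jac_ideal s t W (\<lambda>p. x p - k * path_ser Z p)" "length (snd Z) \<ge> N"
    using assms by blast
  have "x p = x p - k * path_ser Z p" if "length (snd p) < N" for p
    using that kZ(2) by (auto simp: path_ser_def)
  with kZ(1) show "\<exists>y. jac_ideal s t W y \<and> (\<forall>p. length (snd p) < N \<longrightarrow> x p = y p)" by blast
qed

locale quiver_potential =
  fixes s t :: "'a::finite \<Rightarrow> 'v::finite" and f g :: "'a \<Rightarrow> 'a" and c :: "'a \<Rightarrow> 'k::field"
    and Rf Rg :: "'a set"
  assumes setting: "quiver_setting s t f g c"
    and reps_f: "orbit_reps f Rf" and reps_g: "orbit_reps g Rg"
begin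

abbreviation pot :: "'v \<times> 'a list \<Rightarrow> 'k" where "pot \<equiv> potential s f g c Rf Rg"
abbreviation jac :: "('v \<times> 'a list \<Rightarrow> 'k) \<Rightarrow> bool" where "jac x \<equiv> jac_ideal s t pot x"
abbreviation jac_zero :: "('v \<times> 'a list \<Rightarrow> 'k) \<Rightarrow> bool" where "jac_zero x \<equiv> zero_in_jacobian s t pot x"
abbreviation composable :: "'a list \<Rightarrow> bool" where "composable xs \<equiv> successively (\<lambda>a b. t a = s b) xs"
abbreviation word_ser :: "'a list \<Rightarrow> 'v \<times> 'a list \<Rightarrow> 'k" where "word_ser xs \<equiv> path_ser (s (hd xs), xs)"

lemma inj_f: "inj f" and inj_g: "inj g"
  using setting by (auto simp: quiver_setting_def bij_is_inj)

lemma f_f_f [simp]: "f (f (f x)) = x"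
proof -
  have "f ^^ 3 = id" using setting by (simp add: quiver_setting_def)
  then show ?thesis by (simp add: numeral_3_eq_3 fun_eq_iff)
qed

lemma out_arrows: "{f a, g a} = {b. s b = t a}"
  using setting by (simp add: quiver_setting_def)

lemma s_f [simp]: "s (f a) = t a" and s_g [simp]: "s (g a) = t a"
  using out_arrows[of a] by blast+

lemma out_arrow_cases: "s b = t a \<Longrightarrow> b = f a \<or> b = g a"
  using out_arrows[of a] by blast

lemma f_neq_g: "f a \<noteq> g a"
proof
  assume "f a = g a"
  then have "{b. s b = t a} = {f a}" using out_arrows[of a] by simp
  moreover have "card {b. s b = t a} = 2" using setting by (simp add: quiver_setting_def)
  ultimately show False by simp
qed

lemma source_neq_target: "s a \<noteq> t a"
  using setting by (simp add: quiver_setting_def)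

lemma no_2_cycle: "\<not> (s a = t b \<and> t a = s b)"
  using setting by (simp add: quiver_setting_def)

lemma c_orbit: "b \<in> orbit_of g a \<Longrightarrow> c b = c a"
  using setting by (simp add: quiver_setting_def)

lemma orb_size_funpow_g [simp]: "orb_size g ((g ^^ k) a) = orb_size g a"
  by (rule orb_size_eq[OF inj_g]) (rule funpow_in_orbit_of)

lemma orb_size_g_g [simp]: "orb_size g (g a) = orb_size g a"
  using orb_size_funpow_g[of 1 a] by simp

lemma orb_size_g_ge_3: "orb_size g a \<ge> 3"
proof (rule orb_size_ge_3[OF inj_g])
  show "g a \<noteq> a" using source_neq_target[of a] s_g[of a] by metis
  show "g (g a) \<noteq> a"
    using no_2_cycle[of a "g a"] s_g[of "g a"] s_g[of a] by metis
qed

lemma orb_size_f: "orb_size f a = 3"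
proof -
  have f1: "f a \<noteq> a" using source_neq_target[of a] s_f[of a] by metis
  then have "f (f a) \<noteq> a" using f_f_f[of a] by metis
  with f1 have "orb_size f a \<ge> 3" by (rule orb_size_ge_3[OF inj_f])
  moreover have "\<not> 3 < orb_size f a"
    using funpow_orbit_inj[OF inj_f, of 3 a 0] by (force simp: numeral_3_eq_3)
  ultimately show ?thesis by simp
qed

lemma cycle_word_f: "cycle_word f a = [a, f a, f (f a)]"
  by (simp add: cycle_word_def orb_size_f numeral_3_eq_3 upt_rec)

lemma cycle_tail_f: "cycle_tail f a = [f a, f (f a)]"
  by (simp add: cycle_tail_def orb_size_f numeral_3_eq_3 upt_rec)

lemma valid_cycle_tail_f: "valid_path s t (t \<gamma>, cycle_tail f \<gamma>) \<and> path_end t (t \<gamma>, cycle_tail f \<gamma>) = s \<gamma>"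
  by (rule valid_path_cycle_tail[OF inj_f]) (auto simp: orb_size_f)

lemma valid_cycle_tail_g: "valid_path s t (t \<gamma>, cycle_tail g \<gamma>) \<and> path_end t (t \<gamma>, cycle_tail g \<gamma>) = s \<gamma>"
  by (rule valid_path_cycle_tail[OF inj_g]) (use orb_size_g_ge_3[of \<gamma>] in auto)

lemma cycle_tail_g_Cons: "cycle_tail g x = g x # map (\<lambda>k. (g ^^ k) x) [2..<orb_size g x]"
proof -
  have "[1..<orb_size g x] = 1 # [Suc 1..<orb_size g x]"
    by (rule upt_conv_Cons) (use orb_size_g_ge_3[of x] in simp)
  then show ?thesis by (simp add: cycle_tail_def numeral_2_eq_2)
qed

section \<open>Cyclic derivatives of the potential\<close>

lemma pot_arrows_path:
  "pot (arrows_path s xs) =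
     (\<Sum>a\<in>Rf. if cycle_word f a = xs then 1 else 0) - (\<Sum>b\<in>Rg. if cycle_word g b = xs then c b else 0)"
proof -
  have single: "path_ser (arrows_path s ys) (arrows_path s xs) = (if ys = xs then 1 else (0::'k))" for ys
    by (auto simp: path_ser_def arrows_path_def)
  show ?thesis
    unfolding potential_def single cycle_word_f[symmetric]
    by (simp add: cycle_word_def[symmetric] if_distrib cong: if_cong)
qed

lemma cyc_deriv_pot:
  "cyc_deriv s t pot \<gamma> = (\<lambda>p. path_ser (t \<gamma>, cycle_tail f \<gamma>) p - c \<gamma> * path_ser (t \<gamma>, cycle_tail g \<gamma>) p)"
proof (rule ext, clarify)
  fix v as
  show "cyc_deriv s t pot \<gamma> (v, as)
      = path_ser (t \<gamma>, cycle_tail f \<gamma>) (v, as) - c \<gamma> * path_ser (t \<gamma>, cycle_tail g \<gamma>) (v, as)"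
  proof (cases "valid_path s t (v, as) \<and> v = t \<gamma> \<and> path_end t (v, as) = s \<gamma>")
    case True
    have "cyc_deriv s t pot \<gamma> (v, as) = (\<Sum>j<Suc (length as). pot (arrows_path s (rotate j (\<gamma> # as))))"
      by (simp only: cyc_deriv_def prod.case if_P[OF True])
    also have "\<dots> = (\<Sum>j<Suc (length as). \<Sum>a\<in>Rf. if cycle_word f a = rotate j (\<gamma> # as) then 1 else 0)
         - (\<Sum>j<Suc (length as). \<Sum>b\<in>Rg. if cycle_word g b = rotate j (\<gamma> # as) then c b else 0)"
      by (simp add: pot_arrows_path sum_subtractf)
    also have "\<dots> = (if as = cycle_tail f \<gamma> then 1 else 0) - (if as = cycle_tail g \<gamma> then c \<gamma> else 0)"
      using sum_cycle_word_rotations[OF inj_f reps_f, where w="\<lambda>_. 1::'k" and as=as and \<gamma>=\<gamma>]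
        sum_cycle_word_rotations[OF inj_g reps_g, where w=c and as=as and \<gamma>=\<gamma>] c_orbit
      by simp
    finally show ?thesis using True by (auto simp: path_ser_def)
  next
    case False
    then show ?thesis
      using valid_cycle_tail_f[of \<gamma>] valid_cycle_tail_g[of \<gamma>] by (auto simp: cyc_deriv_def path_ser_def)
  qed
qed

lemma jac_cycle_tail_relation:
  assumes word: "composable (U @ cycle_tail f \<gamma> @ V)"
  shows "jac (\<lambda>p. word_ser (U @ cycle_tail f \<gamma> @ V) p - c \<gamma> * word_ser (U @ cycle_tail g \<gamma> @ V) p)"
proof -
  define v0 where "v0 = s (hd (U @ cycle_tail f \<gamma> @ V))"
  define P where "P = (v0, U)"
  define Q where "Q = (s \<gamma>, V)"
  have U: "composable U" and V: "composable V" using word by (auto simp: successively_append_iff)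
  have last_U: "U \<noteq> [] \<Longrightarrow> t (last U) = t \<gamma>"
    using word by (auto simp: successively_append_iff cycle_tail_f)
  have hd_V: "V \<noteq> [] \<Longrightarrow> s (hd V) = s \<gamma>"
    using word s_f[of "f (f \<gamma>)"] by (cases V) (auto simp: successively_append_iff cycle_tail_f)
  have P_valid: "valid_path s t P" using U by (cases U) (auto simp: P_def v0_def valid_path_def)
  have P_end: "path_end t P = t \<gamma>"
    using last_U by (cases U) (auto simp: P_def v0_def path_end_def cycle_tail_f)
  have Q_valid: "valid_path s t Q" using V hd_V by (auto simp: Q_def valid_path_def)
  have "cycle_tail g \<gamma> \<noteq> []" using orb_size_g_ge_3[of \<gamma>] by (simp add: cycle_tail_def)
  then have start_g: "s (hd (U @ cycle_tail g \<gamma> @ V)) = v0"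
    using valid_cycle_tail_g[of \<gamma>] by (cases U) (auto simp: v0_def cycle_tail_f valid_path_def)
  have sandwich: "ser_mult s t (ser_mult s t (path_ser P) (path_ser (t \<gamma>, cycle_tail h \<gamma>))) (path_ser Q)
      = (path_ser (v0, U @ cycle_tail h \<gamma> @ V) :: _ \<Rightarrow> 'k)"
    if h: "valid_path s t (t \<gamma>, cycle_tail h \<gamma>) \<and> path_end t (t \<gamma>, cycle_tail h \<gamma>) = s \<gamma>" for h
  proof -
    have inner: "ser_mult s t (path_ser P) (path_ser (t \<gamma>, cycle_tail h \<gamma>)) = path_ser (v0, U @ cycle_tail h \<gamma>)"
      using ser_mult_path_ser[OF P_valid conjunct1[OF h]] P_end by (simp add: P_def)
    have middle: "valid_path s t (v0, U @ cycle_tail h \<gamma>)"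
      using valid_path_append[of s t v0 U "t \<gamma>" "cycle_tail h \<gamma>"] P_valid P_end h by (simp add: P_def)
    have "path_end t (v0, U @ cycle_tail h \<gamma>) = s \<gamma>"
      using P_end h by (simp add: path_end_append P_def)
    then show ?thesis
      unfolding inner using ser_mult_path_ser[OF middle Q_valid] by (simp add: Q_def)
  qed
  have "ser_mult s t (ser_mult s t (path_ser P) (cyc_deriv s t pot \<gamma>)) (path_ser Q)
      = (\<lambda>p. word_ser (U @ cycle_tail f \<gamma> @ V) p - c \<gamma> * word_ser (U @ cycle_tail g \<gamma> @ V) p)"
    unfolding cyc_deriv_pot ser_mult_diff_right ser_mult_diff_left
    using sandwich[OF valid_cycle_tail_f] sandwich[OF valid_cycle_tail_g] start_g by (simp add: v0_def)
  then show ?thesis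
    unfolding jac_ideal_def
    by (intro exI[of _ "[(path_ser P, \<gamma>, path_ser Q)]"])
      (auto simp: fun_eq_iff is_series_path_ser[OF P_valid] is_series_path_ser[OF Q_valid])
qed

section \<open>Rewriting subwords modulo the Jacobian ideal\<close>

definition word_equiv :: "'a list \<Rightarrow> 'a list \<Rightarrow> 'k \<Rightarrow> bool" where
  "word_equiv X Y k \<longleftrightarrow> (\<forall>U V. composable (U @ X @ V) \<longrightarrow> composable (U @ Y @ V) \<and>
      jac (\<lambda>p. word_ser (U @ X @ V) p - k * word_ser (U @ Y @ V) p))"

lemma word_equivD:
  "word_equiv X Y k \<Longrightarrow> composable (U @ X @ V) \<Longrightarrow>
     composable (U @ Y @ V) \<and> jac (\<lambda>p. word_ser (U @ X @ V) p - k * word_ser (U @ Y @ V) p)"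
  unfolding word_equiv_def by blast

lemma word_equiv_refl: "word_equiv X X 1"
  unfolding word_equiv_def by (simp add: jac_ideal_zero)

lemma word_equiv_trans:
  assumes "word_equiv X Y k1" "word_equiv Y Z k2"
  shows "word_equiv X Z (k1 * k2)"
  unfolding word_equiv_def
proof (intro allI impI)
  fix U V assume "composable (U @ X @ V)"
  then have XY: "composable (U @ Y @ V)" "jac (\<lambda>p. word_ser (U @ X @ V) p - k1 * word_ser (U @ Y @ V) p)"
    using word_equivD[OF assms(1)] by blast+
  then have YZ: "composable (U @ Z @ V)" "jac (\<lambda>p. word_ser (U @ Y @ V) p - k2 * word_ser (U @ Z @ V) p)"
    using word_equivD[OF assms(2)] by blast+
  show "composable (U @ Z @ V) \<and> jac (\<lambda>p. word_ser (U @ X @ V) p - k1 * k2 * word_ser (U @ Z @ V) p)"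
    using YZ(1) jac_ideal_chain[OF XY(2) YZ(2)] by simp
qed

lemma word_equiv_context:
  assumes "word_equiv X Y k"
  shows "word_equiv (U0 @ X @ V0) (U0 @ Y @ V0) k"
  unfolding word_equiv_def
proof (intro allI impI)
  fix U V assume "composable (U @ (U0 @ X @ V0) @ V)"
  then show "composable (U @ (U0 @ Y @ V0) @ V) \<and>
      jac (\<lambda>p. word_ser (U @ (U0 @ X @ V0) @ V) p - k * word_ser (U @ (U0 @ Y @ V0) @ V) p)"
    using word_equivD[OF assms, of "U @ U0" "V0 @ V"] by simp
qed

lemma composable_replace:
  assumes "composable (U @ X @ V)" "X \<noteq> []" "Y \<noteq> []" "composable Y"
    and "s (hd X) = s (hd Y)" "t (last X) = t (last Y)"
  shows "composable (U @ Y @ V)"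
  using assms by (auto simp: successively_append_iff)

lemma word_equiv_cycle_tail: "word_equiv (cycle_tail f \<gamma>) (cycle_tail g \<gamma>) (c \<gamma>)"
  unfolding word_equiv_def
proof (intro allI impI conjI)
  fix U V assume word: "composable (U @ cycle_tail f \<gamma> @ V)"
  then show "jac (\<lambda>p. word_ser (U @ cycle_tail f \<gamma> @ V) p - c \<gamma> * word_ser (U @ cycle_tail g \<gamma> @ V) p)"
    by (rule jac_cycle_tail_relation)
  have ne: "cycle_tail g \<gamma> \<noteq> []" using orb_size_g_ge_3[of \<gamma>] by (simp add: cycle_tail_def)
  have g_tail: "valid_path s t (t \<gamma>, cycle_tail g \<gamma>) \<and> path_end t (t \<gamma>, cycle_tail g \<gamma>) = s \<gamma>"
    by (rule valid_cycle_tail_g)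
  show "composable (U @ cycle_tail g \<gamma> @ V)"
  proof (rule composable_replace[OF word])
    show "composable (cycle_tail g \<gamma>)" "s (hd (cycle_tail f \<gamma>)) = s (hd (cycle_tail g \<gamma>))"
      using g_tail ne by (simp_all add: valid_path_def cycle_tail_f)
    show "t (last (cycle_tail f \<gamma>)) = t (last (cycle_tail g \<gamma>))"
      using g_tail ne s_f[of "f (f \<gamma>)"] by (simp add: path_end_def cycle_tail_f)
  qed (use ne in \<open>simp_all add: cycle_tail_f\<close>)
qed

definition vanishes :: "'a list \<Rightarrow> bool" where
  "vanishes X \<longleftrightarrow> (\<forall>U V. composable (U @ X @ V) \<longrightarrow> jac_zero (word_ser (U @ X @ V)))"

lemma vanishes_context:
  assumes "vanishes X"
  shows "vanishes (U0 @ X @ V0)"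
  unfolding vanishes_def
proof (intro allI impI)
  fix U V assume "composable (U @ (U0 @ X @ V0) @ V)"
  then show "jac_zero (word_ser (U @ (U0 @ X @ V0) @ V))"
    using assms[unfolded vanishes_def, rule_format, of "U @ U0" "V0 @ V"] by simp
qed

lemma vanishes_word_equiv:
  assumes "word_equiv X Y k" "vanishes Y"
  shows "vanishes X"
  unfolding vanishes_def
proof (intro allI impI)
  fix U V assume "composable (U @ X @ V)"
  then have "composable (U @ Y @ V)" "jac (\<lambda>p. word_ser (U @ X @ V) p - k * word_ser (U @ Y @ V) p)"
    using word_equivD[OF assms(1)] by blast+
  moreover have "jac_zero (word_ser (U @ Y @ V))"
    using assms(2) calculation(1) unfolding vanishes_def by blast
  ultimately show "jac_zero (word_ser (U @ X @ V))"
    using zero_in_jacobian_transfer by blast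
qed

lemma vanishes_of_word_equiv_self:
  assumes "word_equiv X X k" "k \<noteq> 1"
  shows "vanishes X"
  unfolding vanishes_def
proof (intro allI impI)
  fix U V assume "composable (U @ X @ V)"
  then have "jac (\<lambda>p. word_ser (U @ X @ V) p - k * word_ser (U @ X @ V) p)"
    using word_equivD[OF assms(1)] by blast
  then have "jac (\<lambda>p. inverse (1 - k) * (word_ser (U @ X @ V) p - k * word_ser (U @ X @ V) p))"
    by (rule jac_ideal_scale)
  moreover have "inverse (1 - k) * (y - k * y) = y" for y :: 'k
  proof -
    have "y - k * y = (1 - k) * y" by (simp add: algebra_simps)
    then show ?thesis using assms(2) by simp
  qed
  ultimately show "jac_zero (word_ser (U @ X @ V))"
    by (simp add: zero_in_jacobian_of_jac_ideal)
qed

lemma vanishes_of_unbounded_word_equiv: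
  assumes "\<And>N. \<exists>Y k. word_equiv X Y k \<and> N \<le> length Y"
  shows "vanishes X"
  unfolding vanishes_def
proof (intro allI impI)
  fix U V assume word: "composable (U @ X @ V)"
  show "jac_zero (word_ser (U @ X @ V))"
  proof (rule zero_in_jacobian_of_long_paths)
    fix N
    obtain Y k where Y: "word_equiv X Y k" "N \<le> length Y" using assms by blast
    have "jac (\<lambda>p. word_ser (U @ X @ V) p - k * word_ser (U @ Y @ V) p)"
      using word_equivD[OF Y(1) word] by blast
    moreover have "N \<le> length (U @ Y @ V)" using Y(2) by simp
    ultimately show "\<exists>k Z. jac (\<lambda>p. word_ser (U @ X @ V) p - k * path_ser Z p) \<and> N \<le> length (snd Z)"
      by (intro exI[of _ k] exI[of _ "(s (hd (U @ Y @ V)), U @ Y @ V)"]) simp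
  qed
qed

section \<open>The paths \<open>a \<cdot> f(a) \<cdot> g(f(a))\<close>\<close>

definition afg_word :: "'a \<Rightarrow> 'a list" where "afg_word a = [a, f a, g (f a)]"
definition agf_word :: "'a \<Rightarrow> 'a list" where "agf_word a = [a, g a, f (g a)]"

lemma f_g_pred: "f ((g ^^ (orb_size g \<delta> - 1)) \<delta>) = g (f (f \<delta>))"
proof -
  define x where "x = (g ^^ (orb_size g \<delta> - 1)) \<delta>"
  have "g x = (g ^^ Suc (orb_size g \<delta> - 1)) \<delta>" by (simp add: x_def)
  also have "Suc (orb_size g \<delta> - 1) = orb_size g \<delta>" using orb_size_g_ge_3[of \<delta>] by simp
  finally have gx: "g x = \<delta>" using funpow_orb_size[OF inj_g] by simp
  have "s (g (f (f \<delta>))) = t x" using s_g[of x] s_f[of "f (f \<delta>)"] by (simp add: gx)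
  then have "g (f (f \<delta>)) = f x \<or> g (f (f \<delta>)) = g x" by (rule out_arrow_cases)
  moreover have "g (f (f \<delta>)) \<noteq> g x" using f_neq_g[of "f (f \<delta>)"] gx by simp
  ultimately show ?thesis by (simp add: x_def)
qed

lemma g_f_f_g: "g (f (f (g b))) = f b"
proof -
  have "s (g (f (f (g b)))) = t b" using s_f[of "f (f (g b))"] by simp
  then have "g (f (f (g b))) = f b \<or> g (f (f (g b))) = g b" by (rule out_arrow_cases)
  moreover have "g (f (f (g b))) \<noteq> g b" using f_neq_g[of "f (f (g b))"] by simp
  ultimately show ?thesis by simp
qed

lemma afg_word_equiv_agf_word:
  fixes a :: 'a
  defines "\<delta> \<equiv> f (f a)"
  defines "\<sigma> \<equiv> (g ^^ (orb_size g \<delta> - 2)) \<delta>"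
  shows "word_equiv (afg_word a) (map (\<lambda>k. (g ^^ k) \<delta>) [1..<orb_size g \<delta> - 2] @ agf_word \<sigma>) (c \<delta>)"
proof -
  define m where "m = orb_size g \<delta>"
  have m: "m \<ge> 3" using orb_size_g_ge_3 m_def by simp
  have "[1..<m] = [1..<m - 2] @ [m - 2, m - 1]"
  proof -
    obtain k where k: "m = k + 3" using m by (metis le_add_diff_inverse2)
    show ?thesis unfolding k by (simp add: numeral_3_eq_3)
  qed
  moreover have "(g ^^ (m - 1)) \<delta> = g \<sigma>"
    using m by (simp add: \<sigma>_def m_def Suc_diff_Suc[symmetric] numeral_2_eq_2)
  ultimately have "cycle_tail g \<delta> @ [g (f a)] = map (\<lambda>k. (g ^^ k) \<delta>) [1..<m - 2] @ agf_word \<sigma>"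
    using f_g_pred[of \<delta>] m by (simp add: cycle_tail_def m_def agf_word_def \<sigma>_def \<delta>_def)
  moreover have "cycle_tail f \<delta> @ [g (f a)] = afg_word a" by (simp add: cycle_tail_f afg_word_def \<delta>_def)
  ultimately show ?thesis
    using word_equiv_context[OF word_equiv_cycle_tail, of "[]" \<delta> "[g (f a)]"] by (simp add: m_def)
qed

lemma agf_word_equiv_afg_word:
  fixes b :: 'a
  defines "\<gamma> \<equiv> f (f (g b))"
  shows "word_equiv (agf_word b) (afg_word b @ map (\<lambda>k. (g ^^ k) \<gamma>) [3..<orb_size g \<gamma>]) (c \<gamma>)"
proof -
  have "[1..<orb_size g \<gamma>] = [1, 2] @ [3..<orb_size g \<gamma>]"
    using orb_size_g_ge_3[of \<gamma>] by (simp add: upt_conv_Cons numeral_3_eq_3)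
  then have "[b] @ cycle_tail g \<gamma> = afg_word b @ map (\<lambda>k. (g ^^ k) \<gamma>) [3..<orb_size g \<gamma>]"
    using g_f_f_g[of b] by (simp add: cycle_tail_def afg_word_def numeral_2_eq_2 \<gamma>_def)
  moreover have "[b] @ cycle_tail f \<gamma> = agf_word b" by (simp add: cycle_tail_f agf_word_def \<gamma>_def)
  ultimately show ?thesis
    using word_equiv_context[OF word_equiv_cycle_tail, of "[b]" \<gamma> "[]"] by simp
qed

lemma afg_word_equiv_shift:
  fixes a :: 'a
  defines "\<delta> \<equiv> f (f a)"
  defines "\<sigma> \<equiv> (g ^^ (orb_size g \<delta> - 2)) \<delta>"
  defines "\<gamma> \<equiv> f (f (g \<sigma>))"
  shows "word_equiv (afg_word a)
     (map (\<lambda>k. (g ^^ k) \<delta>) [1..<orb_size g \<sigma> - 2] @ afg_word \<sigma> @ map (\<lambda>k. (g ^^ k) \<gamma>) [3..<orb_size g (f \<sigma>)])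
     (c \<delta> * c \<gamma>)"
proof -
  define X where "X = map (\<lambda>k. (g ^^ k) \<delta>) [1..<orb_size g \<delta> - 2]"
  have "word_equiv (afg_word a) (X @ agf_word \<sigma>) (c \<delta>)"
    using afg_word_equiv_agf_word[of a] by (simp add: X_def \<delta>_def \<sigma>_def)
  moreover have "word_equiv (X @ agf_word \<sigma>)
      (X @ afg_word \<sigma> @ map (\<lambda>k. (g ^^ k) \<gamma>) [3..<orb_size g \<gamma>]) (c \<gamma>)"
    using word_equiv_context[OF agf_word_equiv_afg_word[of \<sigma>], of X "[]"] by (simp add: \<gamma>_def)
  moreover have "orb_size g \<sigma> = orb_size g \<delta>" by (simp add: \<sigma>_def)
  moreover have "orb_size g (f \<sigma>) = orb_size g \<gamma>"
    using g_f_f_g[of \<sigma>] orb_size_g_g[of \<gamma>] by (simp add: \<gamma>_def)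
  ultimately show ?thesis
    using word_equiv_trans by (simp add: X_def)
qed

lemma afg_word_equiv_longer:
  assumes "\<forall>a. orb_size g a \<ge> 4 \<or> orb_size g (f a) \<ge> 4"
  shows "\<exists>X Y \<sigma> k. word_equiv (afg_word a) (X @ afg_word \<sigma> @ Y) k \<and> X @ Y \<noteq> []"
proof -
  define \<delta> where "\<delta> = f (f a)"
  define \<sigma> where "\<sigma> = (g ^^ (orb_size g \<delta> - 2)) \<delta>"
  define \<gamma> where "\<gamma> = f (f (g \<sigma>))"
  define X where "X = map (\<lambda>k. (g ^^ k) \<delta>) [1..<orb_size g \<sigma> - 2]"
  define Y where "Y = map (\<lambda>k. (g ^^ k) \<gamma>) [3..<orb_size g (f \<sigma>)]"
  have "word_equiv (afg_word a) (X @ afg_word \<sigma> @ Y) (c \<delta> * c \<gamma>)"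
    using afg_word_equiv_shift[of a] by (simp add: X_def Y_def \<delta>_def \<sigma>_def \<gamma>_def)
  moreover have "X @ Y \<noteq> []" using assms[rule_format, of \<sigma>] by (auto simp: X_def Y_def)
  ultimately show ?thesis by blast
qed

lemma afg_word_equiv_unbounded:
  assumes "\<forall>a. orb_size g a \<ge> 4 \<or> orb_size g (f a) \<ge> 4"
  shows "\<exists>Y k. word_equiv (afg_word a) Y k \<and> N \<le> length Y"
proof (induction N arbitrary: a)
  case 0
  show ?case using word_equiv_refl by blast
next
  case (Suc N)
  obtain X Y \<sigma> k where step: "word_equiv (afg_word a) (X @ afg_word \<sigma> @ Y) k" "X @ Y \<noteq> []"
    using afg_word_equiv_longer[OF assms] by blast
  obtain Z k' where IH: "word_equiv (afg_word \<sigma>) Z k'" "N \<le> length Z"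
    using Suc.IH by blast
  have "word_equiv (afg_word a) (X @ Z @ Y) (k * k')"
    by (rule word_equiv_trans[OF step(1) word_equiv_context[OF IH(1)]])
  moreover have "Suc N \<le> length (X @ Z @ Y)"
  proof -
    have "0 < length (X @ Y)" using step(2) by simp
    then show ?thesis using IH(2) unfolding length_append by linarith
  qed
  ultimately show ?case by blast
qed

lemma vanishes_afg_word_star:
  assumes "\<forall>a. orb_size g a \<ge> 4 \<or> orb_size g (f a) \<ge> 4"
  shows "vanishes (afg_word a)"
  using afg_word_equiv_unbounded[OF assms] by (rule vanishes_of_unbounded_word_equiv)

lemma jac_zero_ser_mult_words:
  assumes "xs \<noteq> []" "ys \<noteq> []" "composable xs" "composable ys"
    and "t (last xs) = s (hd ys) \<Longrightarrow> vanishes (xs @ ys)"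
  shows "jac_zero (ser_mult s t (path_ser (arrows_path s xs)) (path_ser (arrows_path s ys)))"
proof (cases "t (last xs) = s (hd ys)")
  case True
  have "valid_path s t (arrows_path s xs)" "valid_path s t (arrows_path s ys)"
    using assms(1-4) by (simp_all add: valid_path_def arrows_path_def)
  moreover have "path_end t (arrows_path s xs) = fst (arrows_path s ys)"
    using True assms(1) by (simp add: arrows_path_def path_end_def)
  ultimately have "ser_mult s t (path_ser (arrows_path s xs)) (path_ser (arrows_path s ys)) = word_ser (xs @ ys)"
    using assms(1) by (simp add: ser_mult_path_ser) (simp add: arrows_path_def)
  moreover have "composable ([] @ (xs @ ys) @ [])"
    using True assms(1-4) by (simp add: successively_append_iff)
  ultimately show ?thesis using assms(5)[OF True] unfolding vanishes_def by (metis append_Nil append_Nil2)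
next
  case False
  then have "ser_mult s t (path_ser (arrows_path s xs)) (path_ser (arrows_path s ys)) = (\<lambda>_. 0 :: 'k)"
    using assms(1) by (intro ser_mult_path_ser_eq_0) (simp add: arrows_path_def path_end_def)
  then show ?thesis by (simp add: zero_in_jacobian_of_jac_ideal jac_ideal_zero)
qed

context
  assumes afg_vanishes: "\<And>a. vanishes (afg_word a)"
begin

lemma vanishes_f_cycle_return: "vanishes [x, f x, f (f x), x]"
proof -
  have "word_equiv ([x, f x] @ cycle_tail f (f x) @ []) ([x, f x] @ cycle_tail g (f x) @ []) (c (f x))"
    by (rule word_equiv_context[OF word_equiv_cycle_tail])
  then have "word_equiv [x, f x, f (f x), x] ([] @ afg_word x @ map (\<lambda>k. (g ^^ k) (f x)) [2..<orb_size g (f x)]) (c (f x))"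
    by (simp add: cycle_tail_f cycle_tail_g_Cons afg_word_def)
  then show ?thesis using vanishes_word_equiv vanishes_context[OF afg_vanishes] by blast
qed

lemma vanishes_g_then_f_cycle: "vanishes [x, g x, f (g x), f (f (g x))]"
proof -
  define \<gamma> where "\<gamma> = f (f (g x))"
  have "word_equiv ([] @ agf_word x @ [\<gamma>]) ([] @ (afg_word x @ map (\<lambda>k. (g ^^ k) \<gamma>) [3..<orb_size g \<gamma>]) @ [\<gamma>]) (c \<gamma>)"
    using word_equiv_context[OF agf_word_equiv_afg_word, of "[]" x "[\<gamma>]"] by (simp add: \<gamma>_def)
  then have "word_equiv [x, g x, f (g x), f (f (g x))] ([] @ afg_word x @ (map (\<lambda>k. (g ^^ k) \<gamma>) [3..<orb_size g \<gamma>] @ [\<gamma>])) (c \<gamma>)"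
    by (simp add: agf_word_def \<gamma>_def)
  then show ?thesis using vanishes_word_equiv vanishes_context[OF afg_vanishes] by blast
qed

lemma vanishes_arrow_z: "t al = s be \<Longrightarrow> vanishes [al, be, f be, f (f be)]"
  using out_arrow_cases[of be al] vanishes_f_cycle_return vanishes_g_then_f_cycle by auto

lemma vanishes_z_arrow: "s al = s be \<Longrightarrow> vanishes [be, f be, f (f be), al]"
proof -
  assume "s al = s be"
  then have "al = be \<or> al = g (f (f be))"
    using out_arrow_cases[of al "f (f be)"] s_f[of "f (f be)"] by auto
  moreover have "vanishes ([be] @ afg_word (f be) @ [])" by (rule vanishes_context[OF afg_vanishes])
  ultimately show ?thesis using vanishes_f_cycle_return by (auto simp: afg_word_def)
qed

end

end

section \<open>All \<open>g\<close>-orbits of size three\<close>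

locale diamond_quiver_potential = quiver_potential +
  assumes orb_size_g_3: "orb_size g a = 3"
begin

lemma g_g_g [simp]: "g (g (g x)) = x"
  using funpow_orb_size[OF inj_g, of x] by (simp add: orb_size_g_3 numeral_3_eq_3)

lemma g_f_f_neq: "g (f (f y)) \<noteq> y"
  using f_neq_g[of "f (f y)"] by simp

lemma g_f_f_involution: "g (f (f (g (f (f y))))) = y"
proof -
  define w where "w = f (f (g (f (f y))))"
  have "s y = t w" using s_f[of "f (f y)"] s_f[of w] by (simp add: w_def)
  then have "y = f w \<or> y = g w" by (rule out_arrow_cases)
  moreover have "y \<noteq> f w" using g_f_f_neq[of y] by (simp add: w_def)
  ultimately show ?thesis by (simp add: w_def)
qed

text \<open>Together with \<open>f\<^sup>3 = g\<^sup>3 = 1\<close>, the following rewrite rules bring every word in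
  \<open>f, g\<close> to one of twelve normal forms (the group generated by \<open>f\<close> and \<open>g\<close> is \<open>A\<^sub>4\<close>, acting
  freely on the arrows). With \<open>f_eq_iff\<close>, \<open>g_eq_iff\<close> and \<open>fixed_point_free\<close>, the simplifier
  then decides equalities between words applied to the same arrow.\<close>

lemma g_f_f [simp]: "g (f (f x)) = f (g (g x))"
  using g_f_f_involution[of "f (g (g x))"] by simp

lemma g_g_f [simp]: "g (g (f x)) = f (f (g x))"
proof -
  have "f (g (g (f x))) = g x" using g_f_f[of "f x"] by simp
  then have "f (f (f (g (g (f x))))) = f (f (g x))" by simp
  then show ?thesis by simp
qed

lemma g_f_g [simp]: "g (f (g x)) = f (g (f x))"
proof -
  have "f (f (g (f (g x)))) = g (f x)"
    using g_g_f[of "f (g x)"] g_f_f[of "g x"] by simp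
  then show ?thesis by (metis f_f_f)
qed

lemma f_eq_iff: "f x = y \<longleftrightarrow> x = f (f y)" and g_eq_iff: "g x = y \<longleftrightarrow> x = g (g y)"
  by auto

lemma fixed_point_free:
  "x \<noteq> f x" "x \<noteq> f (f x)" "x \<noteq> g x" "x \<noteq> g (g x)" "x \<noteq> f (g x)" "x \<noteq> g (f x)"
  "x \<noteq> f (g (g x))" "x \<noteq> f (g (f x))" "x \<noteq> f (f (g x))" "x \<noteq> f (f (g (f x)))" "x \<noteq> f (f (g (g x)))"
proof -
  have f: "f y \<noteq> y" and g: "g y \<noteq> y" and h: "f (g (g y)) \<noteq> y" for y
    using source_neq_target[of y] s_f[of y] s_g[of y] g_f_f_neq[of y] by (metis, metis, simp)
  show "x \<noteq> f (f x)" "x \<noteq> g (g x)" "x \<noteq> f (g (g x))" "x \<noteq> f (g x)" "x \<noteq> g (f x)"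
    "x \<noteq> f (g (f x))" "x \<noteq> f (f (g x))"
    using f[of x] g[of x] h[of x] h[of "f x"] h[of "g x"] h[of "f (f x)"] h[of "f (g x)"]
      f[of "g x"] g[of "f x"]
    by (simp_all add: f_eq_iff g_eq_iff)
  then show "x \<noteq> f x" "x \<noteq> g x" "x \<noteq> f (f (g (f x)))" "x \<noteq> f (f (g (g x)))"
    by (metis f_f_f g_g_g g_f_f g_g_f g_f_g)+
qed

lemma orbit_of_g: "orbit_of g x = {x, g x, g (g x)}"
proof -
  have "{..<3::nat} = {0, 1, 2}" by auto
  then show ?thesis using orbit_of_eq_image[OF inj_g, of x] by (simp add: orb_size_g_3 numeral_2_eq_2)
qed

text \<open>The arrows whose \<open>c\<close>-values appear when \<open>afg_word a\<close> is shifted twice.\<close>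

definition diamond_reps :: "'a \<Rightarrow> 'a set" where
  "diamond_reps a = {f (f a), f (g (f a)), g (g a), f (f (g a))}"

definition diamond_arrows :: "'a \<Rightarrow> 'a set" where
  "diamond_arrows a = (\<Union>r\<in>diamond_reps a. orbit_of g r)"

lemma diamond_arrows_f_f: "x \<in> diamond_arrows a \<Longrightarrow> f (f x) \<in> diamond_arrows a"
  and diamond_arrows_g: "x \<in> diamond_arrows a \<Longrightarrow> g x \<in> diamond_arrows a"
  unfolding diamond_arrows_def diamond_reps_def orbit_of_g by auto

lemma diamond_arrows_f: "x \<in> diamond_arrows a \<Longrightarrow> f x \<in> diamond_arrows a"
  using diamond_arrows_f_f[OF diamond_arrows_f_f] by simp

lemma diamond_arrows_same_source:
  assumes "x \<in> diamond_arrows a" "s b = s x"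
  shows "b \<in> diamond_arrows a"
proof -
  have "s b = t (f (f x))" using assms(2) s_f[of "f (f x)"] by simp
  then have "b = x \<or> b = g (f (f x))" using out_arrow_cases by fastforce
  then show ?thesis using assms(1) diamond_arrows_g[OF diamond_arrows_f_f[OF assms(1)]] by auto
qed

lemma diamond_arrows_target:
  assumes "x \<in> diamond_arrows a" "t b = s x"
  shows "b \<in> diamond_arrows a"
proof -
  have "x = f b \<or> x = g b" using out_arrow_cases[of x b] assms(2) by simp
  then have "b = f (f x) \<or> b = g (g x)" by auto
  then show ?thesis using assms(1) diamond_arrows_f_f diamond_arrows_g by blast
qed

text \<open>Connectedness of \<open>Q\<close> spreads the closure properties above to all arrows.\<close>

lemma in_diamond_arrows: "b \<in> diamond_arrows a"
proof -
  have a0: "f (f a) \<in> diamond_arrows a"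
    unfolding diamond_arrows_def diamond_reps_def orbit_of_g by simp
  have "(s (f (f a)), s b) \<in> ({(s x, t x) | x. True} \<union> {(t x, s x) | x. True})\<^sup>*"
    using setting by (simp add: quiver_setting_def)
  then have "s b \<in> s ` diamond_arrows a"
  proof (induction rule: rtrancl_induct)
    case (step y z)
    then obtain w where w: "w \<in> diamond_arrows a" "y = s w" by blast
    from step.hyps(2) show ?case
    proof
      assume "(y, z) \<in> {(s x, t x) | x. True}"
      then obtain x where "y = s x" "z = t x" by blast
      then show ?thesis
        using diamond_arrows_f[OF diamond_arrows_same_source[OF w(1)]] w(2) s_f[of x] by (metis imageI)
    next
      assume "(y, z) \<in> {(t x, s x) | x. True}"
      then obtain x where "y = t x" "z = s x" by blast
      then show ?thesis using diamond_arrows_target[OF w(1)] w(2) by simp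
    qed
  qed (rule imageI[OF a0])
  then show ?thesis using diamond_arrows_same_source by blast
qed

lemma diamond_reps_orbits_distinct:
  "p \<in> diamond_reps a \<Longrightarrow> q \<in> diamond_reps a \<Longrightarrow> p \<in> orbit_of g q \<Longrightarrow> p = q"
  unfolding diamond_reps_def orbit_of_g
  by (elim insertE emptyE; simp add: f_eq_iff g_eq_iff fixed_point_free)

lemma orbit_reps_diamond_reps: "orbit_reps g (diamond_reps a)"
  unfolding orbit_reps_def
proof
  fix x
  obtain p where p: "p \<in> diamond_reps a" "x \<in> orbit_of g p"
    using in_diamond_arrows[of x a] unfolding diamond_arrows_def by blast
  then have "orbit_of g x = orbit_of g p" using orbit_of_eq[OF inj_g] by blast
  then have "p \<in> orbit_of g x" using self_in_orbit_of[of p g] by simp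
  moreover have "q = p" if q: "q \<in> diamond_reps a" "q \<in> orbit_of g x" for q
  proof -
    have "orbit_of g q = orbit_of g p"
      using orbit_of_eq[OF inj_g q(2)] \<open>orbit_of g x = orbit_of g p\<close> by simp
    then have "q \<in> orbit_of g p" using self_in_orbit_of[of q g] by simp
    then show ?thesis by (rule diamond_reps_orbits_distinct[OF q(1) p(1)])
  qed
  ultimately show "\<exists>!r. r \<in> diamond_reps a \<and> r \<in> orbit_of g x" using p(1) by blast
qed

lemma prod_Rg_c: "(\<Prod>r\<in>Rg. c r) = c (f (f a)) * c (f (g (f a))) * c (g (g a)) * c (f (f (g a)))"
proof -
  have "(\<Prod>r\<in>Rg. c r) = (\<Prod>r\<in>diamond_reps a. c r)"
    using prod_orbit_reps_eq[OF inj_g reps_g orbit_reps_diamond_reps] c_orbit by blast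
  also have "\<dots> = c (f (f a)) * c (f (g (f a))) * c (g (g a)) * c (f (f (g a)))"
    unfolding diamond_reps_def by (simp add: f_eq_iff g_eq_iff fixed_point_free mult.assoc)
  finally show ?thesis .
qed

lemma afg_word_equiv_self: "word_equiv (afg_word a) (afg_word a) (\<Prod>r\<in>Rg. c r)"
proof -
  have shift: "word_equiv (afg_word b) (afg_word (g (f (f b)))) (c (f (f b)) * c (f (f (g (g (f (f b)))))))" for b
    using afg_word_equiv_shift[of b] by (simp add: orb_size_g_3 numeral_3_eq_3)
  have "word_equiv (afg_word a) (afg_word a)
      ((c (f (f a)) * c (f (f (g (g (f (f a))))))) * (c (f (f (g (f (f a))))) * c (f (f (g (g (f (f (g (f (f a)))))))))))"
    using word_equiv_trans[OF shift[of a] shift[of "g (f (f a))"]] g_f_f_involution[of a] by simp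
  then show ?thesis by (simp add: prod_Rg_c[of a] mult_ac)
qed

lemma vanishes_afg_word_diamond:
  assumes "(\<Prod>r\<in>Rg. c r) \<noteq> 1"
  shows "vanishes (afg_word a)"
  using afg_word_equiv_self assms by (rule vanishes_of_word_equiv_self)

end

theorem lemma4p6:
  fixes s t :: "'a::finite \<Rightarrow> 'v::finite"
    and f g :: "'a \<Rightarrow> 'a"
    and c :: "'a \<Rightarrow> 'k::field"
    and Rf Rg :: "'a set"
  assumes setting: "quiver_setting s t f g c"
    and reps_f: "orbit_reps f Rf"
    and reps_g: "orbit_reps g Rg"
    and cond: "(\<forall>a. orb_size g a \<ge> 4 \<or> orb_size g (f a) \<ge> 4)
             \<or> ((\<forall>a. orb_size g a = 3) \<and> (\<Prod>a\<in>Rg. c a) \<noteq> 1)"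
  shows "\<forall>(i::'v) (al::'a) (be::'a). s be = i \<longrightarrow>
           (let W = potential s f g c Rf Rg;
                arr = path_ser (arrows_path s [al]);
                z = path_ser (arrows_path s [be, f be, f (f be)])
            in zero_in_jacobian s t W (ser_mult s t arr z)
             \<and> zero_in_jacobian s t W (ser_mult s t z arr))"
proof -
  interpret quiver_potential s t f g c Rf Rg
    using setting reps_f reps_g by unfold_locales
  have afg_vanishes: "vanishes (afg_word a)" for a
  proof (cases "\<forall>a. orb_size g a \<ge> 4 \<or> orb_size g (f a) \<ge> 4")
    case True
    then show ?thesis by (rule vanishes_afg_word_star)
  next
    case False
    with cond have diamond: "\<forall>a. orb_size g a = 3" and prod_c: "(\<Prod>a\<in>Rg. c a) \<noteq> 1"
      by auto
    interpret diamond_quiver_potential s t f g c Rf Rg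
      using diamond by unfold_locales blast
    show ?thesis using prod_c by (rule vanishes_afg_word_diamond)
  qed
  show ?thesis
  proof (intro allI impI, unfold Let_def, intro conjI)
    fix al be :: 'a
    have end_z: "t (f (f be)) = s be" using s_f[of "f (f be)"] by simp
    show "jac_zero (ser_mult s t (path_ser (arrows_path s [al])) (path_ser (arrows_path s [be, f be, f (f be)])))"
      by (rule jac_zero_ser_mult_words) (simp_all add: vanishes_arrow_z[OF afg_vanishes])
    show "jac_zero (ser_mult s t (path_ser (arrows_path s [be, f be, f (f be)])) (path_ser (arrows_path s [al])))"
      by (rule jac_zero_ser_mult_words) (simp_all add: end_z vanishes_z_arrow[OF afg_vanishes])
  qed
qed

end
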